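(* For every $n\ge1$, $S_n(n)=\dfrac{(-1)^{n-1}}{3\cdot 2^n(n-1)!}$.
   Context: Let $a_0,a_1,\dots$ be indeterminates and $a(x)=\sum_{i\ge0}a_ix^i$. For a positive integer $j$ set $G(x)=\prod_{i=0}^{j-1}\frac{1+a(x)x^2}{1+ix}$, $H(x)=\prod_{i=1-j}^{-1}\frac{1+ix}{1+a(x)x^2}$ (formal power series in $x$), $u=2j-1$, $v=j(j-1)$. For each $n\ge1$ there are unique polynomials $S_0(n),\dots,S_n(n)\in\mathbb{Q}[a_0,\dots,a_{n-2}]$ (rational constants when $n=1$), independent of $j$, such that for every positive integer $j$ the coefficient of $x^{n-1}$ in $\frac{G(x)-H(x)}{x^2}(1+a(x)x^2)$ equals $u\big(a_{n-1}+S_0(n)+S_1(n)v+\cdots+S_n(n)v^n\big)$. *)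

theory Defs
  imports "HOL-Computational_Algebra.Formal_Power_Series"
begin

text \<open>The indeterminates a_0, a_1, ... are modelled by an arbitrary rational
  assignment a :: nat => rat; a(x) is the formal power series with coefficients a.\<close>

definition aser :: "(nat \<Rightarrow> rat) \<Rightarrow> rat fps" where
  "aser a = Abs_fps a"

definition Gser :: "(nat \<Rightarrow> rat) \<Rightarrow> nat \<Rightarrow> rat fps" where
  "Gser a j = (\<Prod>i<j. (1 + aser a * fps_X ^ 2) * inverse (1 + of_nat i * fps_X))"

definition Hser :: "(nat \<Rightarrow> rat) \<Rightarrow> nat \<Rightarrow> rat fps" where
  "Hser a j = (\<Prod>i\<in>{1 - int j .. -1}. (1 + of_int i * fps_X) * inverse (1 + aser a * fps_X ^ 2))"

text \<open>(G - H)/x^2 * (1 + a(x) x^2). G - H has vanishing coefficients of x^0 and x^1,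
  so division by x^2 is exactly fps_shift 2.\<close>
definition Eser :: "(nat \<Rightarrow> rat) \<Rightarrow> nat \<Rightarrow> rat fps" where
  "Eser a j = fps_shift 2 (Gser a j - Hser a j) * (1 + aser a * fps_X ^ 2)"

end

(* Writing G_t for the product defining G at j = t, one has G_0 = 1 and
   G_(t+1) (1 + t x) = G_t (1 + a(x) x^2). Comparing coefficients shows that the coefficient of
   x^m in G_t is a polynomial g_m(t) of degree 2m, g_(m+1) being an antidifference of an
   expression in g_0, ..., g_m; induction gives its two top coefficients. As H at j is G at
   1 - j, the coefficient in question is P(j) for a polynomial P of degree 2n + 1 with
   P(1 - t) = -P(t). Such a P is a combination of (2t - 1) (t (t - 1))^k for k <= n, and S_n is
   half the leading coefficient of P, which is determined by the two top coefficients of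
   g_(n+1). *)

theory Submission
  imports Defs "HOL-Computational_Algebra.Polynomial"
begin

lemma pcompose_power: "pcompose (p ^ n) q = pcompose p q ^ n"
  by (induction n) (simp_all add: pcompose_mult pcompose_1)

lemma pcompose_monom: "pcompose (monom c n) q = smult c (q ^ n)"
  by (simp add: monom_altdef pcompose_smult pcompose_power pcompose_pCons)

lemma coeff_linear_power: "coeff ([:1, s:] ^ n) i = of_nat (n choose i) * (s::'a::comm_ring_1) ^ i"
proof (cases "i \<le> n")
  case True then show ?thesis by (simp add: coeff_linear_poly_power)
next
  case False
  have "degree ([:1, s:] ^ n) \<le> n"
    by (rule order.trans[OF degree_power_le]) simp
  with False show ?thesis by (simp add: coeff_eq_0 binomial_eq_0)
qed

lemma coeff_pcompose_linear:
  fixes p :: "'a::comm_ring_1 poly"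
  assumes "degree p \<le> N"
  shows "coeff (pcompose p [:1, s:]) k = (\<Sum>i\<le>N. of_nat (i choose k) * coeff p i) * s ^ k"
proof -
  have "pcompose p [:1, s:] = (\<Sum>i\<le>N. smult (coeff p i) ([:1, s:] ^ i))"
    by (subst poly_as_sum_of_monoms'[OF assms, symmetric])
       (simp add: pcompose_sum pcompose_monom)
  then show ?thesis by (simp add: coeff_sum coeff_linear_power sum_distrib_left mult_ac)
qed

lemma coeff_pcompose_linear_near_top:
  fixes p :: "'a::comm_ring_1 poly"
  assumes "degree p \<le> k + d"
  shows "coeff (pcompose p [:1, s:]) k = (\<Sum>i=k..k+d. of_nat (i choose k) * coeff p i) * s ^ k"
proof -
  have "(\<Sum>i\<le>k+d. of_nat (i choose k) * coeff p i)
      = (\<Sum>i=k..k+d. of_nat (i choose k) * coeff p i)"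
    by (intro sum.mono_neutral_right) (auto simp: binomial_eq_0)
  then show ?thesis using coeff_pcompose_linear[OF assms] by simp
qed

lemma degree_le_if_coeff_Suc_eq_0:
  assumes "degree p \<le> Suc n" "coeff p (Suc n) = 0"
  shows "degree p \<le> n"
  using assms by (metis le_SucE leading_coeff_0_iff degree_0 zero_less_Suc less_irrefl)

definition fdiff :: "'a::comm_ring_1 poly \<Rightarrow> 'a poly" where
  "fdiff p = pcompose p [:1, 1:] - p"

lemma poly_fdiff: "poly (fdiff p) t = poly p (t + 1) - poly p t"
  by (simp add: fdiff_def poly_pcompose add.commute)

lemma fdiff_add: "fdiff (p + q) = fdiff p + fdiff q"
  by (simp add: fdiff_def pcompose_add)

lemma coeff_fdiff:
  assumes "degree p \<le> k + d"
  shows "coeff (fdiff p) k = (\<Sum>i=Suc k..k+d. of_nat (i choose k) * coeff p i)"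
  using coeff_pcompose_linear_near_top[OF assms, of 1]
  by (simp add: fdiff_def sum.atLeast_Suc_atMost)

lemma degree_fdiff_le:
  assumes "degree p \<le> Suc n"
  shows "degree (fdiff p) \<le> n"
proof -
  have "degree (fdiff p) \<le> Suc n"
    unfolding fdiff_def using degree_pcompose_le[of p "[:1, 1:]"] assms
    by (intro degree_diff_le) auto
  moreover have "coeff (fdiff p) (Suc n) = 0"
    using coeff_fdiff[of p "Suc n" 0] assms by simp
  ultimately show ?thesis by (rule degree_le_if_coeff_Suc_eq_0)
qed

lemma coeff_fdiff_top:
  "degree p \<le> Suc n \<Longrightarrow> coeff (fdiff p) n = of_nat (Suc n) * coeff p (Suc n)"
  using coeff_fdiff[of p n 1] by simp

lemma of_nat_Suc_Suc_choose:
  "(of_nat (Suc (Suc n) choose n) :: 'a::field_char_0) = of_nat (n + 2) * of_nat (n + 1) / 2"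
proof -
  have "2 * (Suc (Suc n) choose n) = (n + 2) * (n + 1)"
    by (induction n) (simp_all add: algebra_simps)
  then have "2 * (of_nat (Suc (Suc n) choose n) :: 'a) = of_nat (n + 2) * of_nat (n + 1)"
    by (metis of_nat_mult of_nat_numeral)
  then show ?thesis by (simp add: field_simps)
qed

lemma coeff_fdiff_near_top:
  fixes p :: "'a::field_char_0 poly"
  assumes "degree p \<le> Suc (Suc n)"
  shows "coeff (fdiff p) n =
    of_nat (Suc n) * coeff p (Suc n) + of_nat (n + 2) * of_nat (n + 1) / 2 * coeff p (Suc (Suc n))"
  using coeff_fdiff[of p n 2] assms by (simp add: numeral_2_eq_2 of_nat_Suc_Suc_choose)

lemma exists_antidifference:
  fixes q :: "'a::field_char_0 poly"
  assumes "degree q \<le> n"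
  shows "\<exists>p. poly p 0 = 0 \<and> fdiff p = q \<and> degree p \<le> Suc n"
  using assms
proof (induction n arbitrary: q)
  case 0
  then obtain c where "q = [:c:]" using degree0_coeffs by auto
  then show ?case
    by (intro exI[of _ "[:0, c:]"]) (simp add: fdiff_def pcompose_pCons)
next
  case (Suc n)
  define p0 where "p0 = monom (coeff q (Suc n) / of_nat (n + 2)) (n + 2)"
  have "degree p0 \<le> Suc (Suc n)" by (simp add: p0_def degree_monom_le)
  moreover have "(of_nat (n + 2) :: 'a) \<noteq> 0" by (simp only: of_nat_eq_0_iff)
  ultimately have "degree (q - fdiff p0) \<le> Suc n" "coeff (q - fdiff p0) (Suc n) = 0"
    using degree_fdiff_le[of p0] coeff_fdiff_top[of p0 "Suc n"] Suc.prems
    by (auto intro: degree_diff_le simp: p0_def)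
  then obtain p1 where p1: "poly p1 0 = 0" "fdiff p1 = q - fdiff p0" "degree p1 \<le> Suc n"
    using Suc.IH degree_le_if_coeff_Suc_eq_0 by blast
  show ?case
  proof (intro exI[of _ "p0 + p1"] conjI)
    show "poly (p0 + p1) 0 = 0" using p1 by (simp add: p0_def poly_monom)
    show "fdiff (p0 + p1) = q" using p1 by (simp add: fdiff_add)
    show "degree (p0 + p1) \<le> Suc (Suc n)"
      using \<open>degree p0 \<le> _\<close> p1(3) by (intro degree_add_le) auto
  qed
qed

definition antidiff :: "'a::field_char_0 poly \<Rightarrow> 'a poly" where
  "antidiff q = (SOME p. poly p 0 = 0 \<and> fdiff p = q \<and> degree p \<le> Suc (degree q))"

lemma antidiff_spec:
  "poly (antidiff q) 0 = 0 \<and> fdiff (antidiff q) = q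
     \<and> degree (antidiff q) \<le> Suc (degree q)"
  using someI_ex[OF exists_antidifference[OF order.refl]] unfolding antidiff_def .

lemma poly_antidiff_0: "poly (antidiff q) 0 = 0"
  using antidiff_spec by blast

lemma fdiff_antidiff: "fdiff (antidiff q) = q"
  using antidiff_spec by blast

lemma degree_antidiff: "degree (antidiff q) \<le> Suc (degree q)"
  using antidiff_spec by blast

definition odd_about_half :: "'a::comm_ring_1 poly \<Rightarrow> bool" where
  "odd_about_half P \<longleftrightarrow> pcompose P [:1, -1:] = - P"

lemma odd_about_half_top_coeff:
  fixes P :: "'a::field_char_0 poly"
  assumes "odd_about_half P" "degree P \<le> 2 * k"
  shows "coeff P (2 * k) = 0"
proof -
  have "- coeff P (2 * k) = coeff P (2 * k)"
    using coeff_pcompose_linear_near_top[of P "2 * k" 0 "-1"] assms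
    by (simp add: odd_about_half_def)
  then show ?thesis by simp
qed

definition odd_basis :: "nat \<Rightarrow> 'a::comm_ring_1 poly" where
  "odd_basis k = [:-1, 2:] * [:0, -1, 1:] ^ k"

lemma poly_odd_basis: "poly (odd_basis k) t = (2 * t - 1) * (t * (t - 1)) ^ k"
  by (simp add: odd_basis_def algebra_simps)

lemma odd_about_half_odd_basis: "odd_about_half (odd_basis k)"
proof -
  have "pcompose [:-1, 2:] [:1, -1:] = - [:-1, 2 :: 'a:]"
    by (simp add: pcompose_pCons)
  moreover have "pcompose [:0, -1, 1:] [:1, -1:] = [:0, -1, 1 :: 'a:]"
    by (simp add: pcompose_pCons)
  ultimately show ?thesis
    unfolding odd_about_half_def odd_basis_def pcompose_mult pcompose_power
    by (simp only: minus_mult_left)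
qed

lemma degree_odd_basis: "degree (odd_basis k :: 'a::field_char_0 poly) = 2 * k + 1"
  unfolding odd_basis_def by (subst degree_mult_eq) (auto simp: degree_power_eq)

lemma coeff_odd_basis_top: "coeff (odd_basis k :: 'a::field_char_0 poly) (2 * k + 1) = 2"
proof -
  have "coeff (odd_basis k :: 'a poly) (2 * k + 1) = lead_coeff (odd_basis k :: 'a poly)"
    by (simp add: degree_odd_basis)
  also have "\<dots> = 2" unfolding odd_basis_def lead_coeff_mult lead_coeff_power by simp
  finally show ?thesis .
qed

lemma odd_about_half_diff:
  "odd_about_half P \<Longrightarrow> odd_about_half Q \<Longrightarrow> odd_about_half (P - Q)"
  by (simp add: odd_about_half_def pcompose_diff)

lemma odd_about_half_smult: "odd_about_half P \<Longrightarrow> odd_about_half (smult c P)"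
  by (simp add: odd_about_half_def pcompose_smult)

lemma odd_about_half_remove_top:
  fixes P :: "'a::field_char_0 poly"
  assumes odd: "odd_about_half P" and deg: "degree P \<le> 2 * n + 1"
  defines "Q \<equiv> P - smult (coeff P (2 * n + 1) / 2) (odd_basis n)"
  shows "odd_about_half Q" "degree Q \<le> 2 * n" "coeff Q (2 * n) = 0"
proof -
  show oddQ: "odd_about_half Q"
    unfolding Q_def by (intro odd_about_half_diff odd_about_half_smult odd odd_about_half_odd_basis)
  have "degree (odd_basis n :: 'a poly) \<le> Suc (2 * n)" by (simp add: degree_odd_basis)
  then have "degree Q \<le> Suc (2 * n)"
    unfolding Q_def using deg by (intro degree_diff_le order.trans[OF degree_smult_le]) auto
  moreover have "coeff Q (Suc (2 * n)) = 0"
    using coeff_odd_basis_top[of n, where 'a='a] by (simp add: Q_def)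
  ultimately show degQ: "degree Q \<le> 2 * n" by (rule degree_le_if_coeff_Suc_eq_0)
  show "coeff Q (2 * n) = 0" by (rule odd_about_half_top_coeff[OF oddQ degQ])
qed

lemma odd_about_half_expansion:
  fixes P :: "'a::field_char_0 poly"
  assumes "odd_about_half P" "degree P \<le> 2 * n + 1"
  shows "\<exists>S. P = (\<Sum>k\<le>n. smult (S k) (odd_basis k))
             \<and> S n = coeff P (2 * n + 1) / 2"
  using assms
proof (induction n arbitrary: P)
  case 0
  define s where "s = coeff P 1 / 2"
  have "degree (P - smult s (odd_basis 0)) = 0" "coeff (P - smult s (odd_basis 0)) 0 = 0"
    using odd_about_half_remove_top[OF 0] by (simp_all add: s_def)
  then have "P - smult s (odd_basis 0) = 0" by (metis leading_coeff_0_iff)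
  then show ?case by (intro exI[of _ "\<lambda>_. s"]) (simp add: s_def)
next
  case (Suc n)
  define s where "s = coeff P (2 * Suc n + 1) / 2"
  define Q where "Q = P - smult s (odd_basis (Suc n))"
  have "odd_about_half Q" "degree Q \<le> 2 * n + 1"
    using odd_about_half_remove_top[OF Suc.prems] degree_le_if_coeff_Suc_eq_0[of Q "2 * n + 1"]
    by (simp_all add: Q_def s_def)
  then obtain S where "Q = (\<Sum>k\<le>n. smult (S k) (odd_basis k))"
    using Suc.IH by blast
  then have "P = (\<Sum>k\<le>n. smult (S k) (odd_basis k)) + smult s (odd_basis (Suc n))"
    by (metis Q_def diff_add_cancel)
  then have "P = (\<Sum>k\<le>Suc n. smult ((S(Suc n := s)) k) (odd_basis k))"
    by simp
  then show ?case by (intro exI[of _ "S(Suc n := s)"]) (simp add: s_def)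
qed

(* The value of gpoly a m at t is the coefficient of x^m in G_t; the recursion is the
   coefficient of x^(m+1) in G_(t+1) (1 + t x) = G_t (1 + a(x) x^2). *)
fun gpoly :: "(nat \<Rightarrow> rat) \<Rightarrow> nat \<Rightarrow> rat poly" where
  "gpoly a 0 = 1"
| "gpoly a (Suc m) =
     antidiff ((\<Sum>k<m. smult (a k) (gpoly a (m - 1 - k)))
               - [:0, 1:] * pcompose (gpoly a m) [:1, 1:])"

declare gpoly.simps(2) [simp del]

definition Gfps :: "(nat \<Rightarrow> rat) \<Rightarrow> rat \<Rightarrow> rat fps" where
  "Gfps a t = Abs_fps (\<lambda>m. poly (gpoly a m) t)"

lemma fdiff_gpoly_Suc:
  "fdiff (gpoly a (Suc m)) =
     (\<Sum>k<m. smult (a k) (gpoly a (m - 1 - k))) - [:0, 1:] * pcompose (gpoly a m) [:1, 1:]"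
  by (simp add: gpoly.simps(2) fdiff_antidiff)

lemma poly_gpoly_recurrence:
  "poly (gpoly a (Suc m)) (t + 1) + t * poly (gpoly a m) (t + 1)
     = poly (gpoly a (Suc m)) t + (\<Sum>k<m. a k * poly (gpoly a (m - 1 - k)) t)"
  using arg_cong[OF fdiff_gpoly_Suc, of "\<lambda>p. poly p t"]
  by (simp add: poly_fdiff poly_pcompose poly_sum algebra_simps)

lemma poly_gpoly_0: "poly (gpoly a m) 0 = (if m = 0 then 1 else 0)"
  by (cases m) (simp_all add: gpoly.simps(2) poly_antidiff_0)

lemma Gfps_0: "Gfps a 0 = 1"
  by (simp add: Gfps_def fps_eq_iff poly_gpoly_0)

lemma Gfps_recurrence:
  "Gfps a (t + 1) * (1 + fps_const t * fps_X) = Gfps a t * (1 + aser a * fps_X ^ 2)"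
  (is "?L = ?R")
proof (rule fps_ext)
  fix m
  have lhs: "?L = Gfps a (t + 1) + fps_const t * (fps_X * Gfps a (t + 1))"
    by (simp add: algebra_simps)
  have rhs: "?R = Gfps a t + fps_X ^ 2 * (aser a * Gfps a t)"
    by (simp add: algebra_simps)
  show "fps_nth ?L m = fps_nth ?R m"
  proof (cases m)
    case 0
    then show ?thesis unfolding lhs rhs by (simp add: Gfps_def)
  next
    case (Suc m')
    have "fps_nth (fps_X ^ 2 * (aser a * Gfps a t)) (Suc m')
        = (\<Sum>k<m'. a k * poly (gpoly a (m' - 1 - k)) t)"
    proof (cases m')
      case (Suc m'')
      have "fps_nth (fps_X ^ 2 * (aser a * Gfps a t)) (Suc m') = fps_nth (aser a * Gfps a t) m''"
        using Suc by (simp add: fps_X_power_mult_nth)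
      also have "\<dots> = (\<Sum>k\<le>m''. a k * poly (gpoly a (m'' - k)) t)"
        by (simp add: fps_mult_nth aser_def Gfps_def atLeast0AtMost)
      finally show ?thesis
        using Suc by (simp add: lessThan_Suc_atMost)
    qed simp
    then show ?thesis
      unfolding lhs rhs Suc using poly_gpoly_recurrence[of a m' t] by (simp add: Gfps_def)
  qed
qed

lemma fps_eq_mult_inverse:
  fixes f :: "'a::field fps"
  assumes "fps_nth f 0 \<noteq> 0" "u * f = v"
  shows "u = v * inverse f"
  using assms by (simp flip: assms(2) add: mult.assoc inverse_mult_eq_1')

lemma Gser_eq_Gfps: "Gser a j = Gfps a (of_nat j)"
proof (induction j)
  case 0
  then show ?case by (simp add: Gser_def Gfps_0)
next
  case (Suc j)
  have "Gser a (Suc j)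
      = Gfps a (of_nat j) * (1 + aser a * fps_X ^ 2) * inverse (1 + of_nat j * fps_X)"
    using Suc.IH by (simp add: Gser_def mult.assoc)
  also have "\<dots> = Gfps a (of_nat j + 1)"
  proof (rule fps_eq_mult_inverse[symmetric])
    show "Gfps a (of_nat j + 1) * (1 + of_nat j * fps_X)
        = Gfps a (of_nat j) * (1 + aser a * fps_X ^ 2)"
      using Gfps_recurrence[of a "of_nat j"] by (simp add: fps_of_nat)
  qed simp
  finally show ?case by (simp add: add.commute)
qed

lemma Hser_eq_Gfps: "j \<ge> 1 \<Longrightarrow> Hser a j = Gfps a (1 - of_nat j)"
proof (induction j rule: dec_induct)
  case base
  then show ?case by (simp add: Hser_def Gfps_0)
next
  case (step j)
  have "{1 - int (Suc j) .. -1} = insert (- int j) {1 - int j .. -1}"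
    using step.hyps by auto
  then have "Hser a (Suc j) = Gfps a (1 - of_nat j) * (1 + fps_const (- of_nat j) * fps_X)
      * inverse (1 + aser a * fps_X ^ 2)"
    using step.IH by (simp add: Hser_def mult_ac fps_of_int[symmetric] fps_const_neg)
  also have "\<dots> = Gfps a (- of_nat j)"
    by (rule fps_eq_mult_inverse[symmetric])
      (simp_all add: Gfps_recurrence[of a "- of_nat j", simplified])
  finally show ?case by simp
qed

lemma degree_gpoly: "degree (gpoly a m) \<le> 2 * m"
proof (induction m rule: less_induct)
  case (less m)
  show ?case
  proof (cases m)
    case (Suc m')
    have "degree (\<Sum>k<m'. smult (a k) (gpoly a (m' - 1 - k))) \<le> 2 * m'"
    proof (intro degree_sum_le order.trans[OF degree_smult_le])
      fix k assume "k \<in> {..<m'}"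
      then have "m' - 1 - k < m" "2 * (m' - 1 - k) \<le> 2 * m'" using Suc by auto
      then show "degree (gpoly a (m' - 1 - k)) \<le> 2 * m'" using less.IH by (meson order.trans)
    qed simp
    moreover have "degree ([:0, 1:] * pcompose (gpoly a m') [:1, 1:]) \<le> Suc (2 * m')"
      using degree_pcompose_le[of "gpoly a m'" "[:1, 1:]"] less[of m'] Suc
      by (auto intro: order.trans[OF degree_pCons_le])
    ultimately have "degree ((\<Sum>k<m'. smult (a k) (gpoly a (m' - 1 - k)))
        - [:0, 1:] * pcompose (gpoly a m') [:1, 1:]) \<le> Suc (2 * m')"
      by (intro degree_diff_le) auto
    then show ?thesis
      unfolding Suc gpoly.simps(2) by (intro order.trans[OF degree_antidiff]) simp
  qed simp
qed

lemma coeff_gpoly_conv_eq_0: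
  assumes "2 * m \<le> Suc i"
  shows "coeff (\<Sum>k<m. smult (a k) (gpoly a (m - 1 - k))) i = 0"
  unfolding coeff_sum
proof (intro sum.neutral ballI)
  fix k assume "k \<in> {..<m}"
  then have "degree (gpoly a (m - 1 - k)) < i"
    using degree_gpoly[of a "m - 1 - k"] assms by auto
  then show "coeff (smult (a k) (gpoly a (m - 1 - k))) i = 0" by (simp add: coeff_eq_0)
qed

lemma coeff_fdiff_gpoly_Suc:
  assumes "2 * m \<le> Suc (Suc i)"
  shows "coeff (fdiff (gpoly a (Suc m))) (Suc i) = - coeff (pcompose (gpoly a m) [:1, 1:]) i"
  using coeff_gpoly_conv_eq_0[of m "Suc i" a] assms by (simp add: fdiff_gpoly_Suc)

definition gpoly_lead :: "nat \<Rightarrow> rat" where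
  "gpoly_lead m = (-1) ^ m / (2 ^ m * fact m)"

definition gpoly_sublead :: "nat \<Rightarrow> rat" where
  "gpoly_sublead m = gpoly_lead m * of_nat m * (2 * of_nat m - 5) / 3"

lemma gpoly_lead_Suc: "gpoly_lead (Suc m) = - gpoly_lead m / (2 * of_nat (Suc m))"
  by (simp add: gpoly_lead_def field_simps)

lemma coeff_gpoly_lead: "coeff (gpoly a m) (2 * m) = gpoly_lead m"
proof (induction m)
  case 0
  then show ?case by (simp add: gpoly_lead_def)
next
  case (Suc m)
  have "of_nat (2 * m + 2) * coeff (gpoly a (Suc m)) (2 * m + 2)
      = coeff (fdiff (gpoly a (Suc m))) (Suc (2 * m))"
    using coeff_fdiff_top[of "gpoly a (Suc m)" "Suc (2 * m)"] degree_gpoly[of a "Suc m"] by simp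
  also have "\<dots> = - gpoly_lead m"
    using coeff_fdiff_gpoly_Suc[of m "2 * m" a] degree_gpoly[of a m] Suc.IH
      coeff_pcompose_linear_near_top[of "gpoly a m" "2 * m" 0 1]
    by simp
  finally show ?case
    by (simp add: gpoly_lead_Suc field_simps)
qed

lemma gpoly_sublead_recurrence:
  "of_nat (2 * m + 3) * gpoly_sublead (Suc (Suc m))
     + of_nat (2 * m + 4) * of_nat (2 * m + 3) / 2 * gpoly_lead (Suc (Suc m))
   = - (gpoly_sublead (Suc m) + of_nat (2 * m + 2) * gpoly_lead (Suc m))"
proof -
  have "(of_nat (Suc (Suc m)) :: rat) \<noteq> 0" by (simp only: of_nat_eq_0_iff)
  then show ?thesis
    unfolding gpoly_sublead_def gpoly_lead_Suc[of "Suc m"]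
    by (simp add: field_simps del: of_nat_Suc) (simp add: algebra_simps)
qed

lemma gpoly_sublead_plus_lead:
  "gpoly_sublead (N + 2) + of_nat (N + 2) * gpoly_lead (N + 2)
     = (-1) ^ N / (3 * 2 ^ Suc N * fact N)"
proof -
  have "(of_nat (Suc (Suc N)) :: rat) \<noteq> 0" "(of_nat (Suc N) :: rat) \<noteq> 0"
    by (simp_all only: of_nat_eq_0_iff)
  then show ?thesis
    by (simp add: gpoly_sublead_def gpoly_lead_def eval_nat_numeral field_simps del: of_nat_Suc)
      (simp add: algebra_simps)
qed

lemma coeff_gpoly_sublead: "coeff (gpoly a (Suc m)) (2 * m + 1) = gpoly_sublead (Suc m)"
proof (induction m)
  case 0
  have "coeff (gpoly a 1) 1 + coeff (gpoly a 1) 2 = coeff (fdiff (gpoly a 1)) 0"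
    using coeff_fdiff_near_top[of "gpoly a 1" 0] degree_gpoly[of a 1] by (simp add: numeral_2_eq_2)
  also have "\<dots> = 0" by (simp add: fdiff_gpoly_Suc)
  finally show ?case
    using coeff_gpoly_lead[of a 1] by (simp add: gpoly_sublead_def gpoly_lead_def)
next
  case (Suc m)
  let ?g = "gpoly a (Suc (Suc m))" and ?g' = "gpoly a (Suc m)"
  let ?top = "of_nat (2 * m + 4) * of_nat (2 * m + 3) / 2 * gpoly_lead (Suc (Suc m))"
  have "of_nat (2 * m + 3) * coeff ?g (2 * m + 3) + ?top = coeff (fdiff ?g) (Suc (2 * m + 1))"
    using coeff_fdiff_near_top[of ?g "2 * m + 2"] degree_gpoly[of a "Suc (Suc m)"]
      coeff_gpoly_lead[of a "Suc (Suc m)"]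
    by (simp add: numeral_eq_Suc)
  also have "\<dots> = - (coeff ?g' (2 * m + 1) + of_nat (2 * m + 2) * coeff ?g' (2 * m + 2))"
    using coeff_fdiff_gpoly_Suc[of "Suc m" "2 * m + 1" a]
      coeff_pcompose_linear_near_top[of ?g' "2 * m + 1" 1 1] degree_gpoly[of a "Suc m"]
    by simp
  also have "\<dots> = of_nat (2 * m + 3) * gpoly_sublead (Suc (Suc m)) + ?top"
    using Suc.IH coeff_gpoly_lead[of a "Suc m"] gpoly_sublead_recurrence[of m] by simp
  finally show ?case by (simp add: eval_nat_numeral)
qed

definition gpoly_skew :: "(nat \<Rightarrow> rat) \<Rightarrow> nat \<Rightarrow> rat poly" where
  "gpoly_skew a m = gpoly a m - pcompose (gpoly a m) [:1, -1:]"

lemma odd_about_half_gpoly_skew: "odd_about_half (gpoly_skew a m)"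
proof -
  have "pcompose (pcompose (gpoly a m) [:1, -1:]) [:1, -1:] = gpoly a m"
    by (simp flip: pcompose_assoc add: pcompose_pCons)
  then show ?thesis by (simp add: odd_about_half_def gpoly_skew_def pcompose_diff)
qed

lemma degree_gpoly_skew: "degree (gpoly_skew a m) \<le> 2 * m"
  unfolding gpoly_skew_def using degree_gpoly[of a m] degree_pcompose_le[of "gpoly a m" "[:1, -1:]"]
  by (intro degree_diff_le) auto

lemma degree_coeff_gpoly_skew_Suc:
  "degree (gpoly_skew a (Suc m)) \<le> 2 * m + 1"
  "coeff (gpoly_skew a (Suc m)) (2 * m + 1)
     = 2 * gpoly_sublead (Suc m) + of_nat (2 * m + 2) * gpoly_lead (Suc m)"
proof -
  have deg: "degree (gpoly a (Suc m)) \<le> 2 * m + 1 + 1" using degree_gpoly[of a "Suc m"] by simp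
  have "degree (gpoly_skew a (Suc m)) \<le> Suc (2 * m + 1)"
    using degree_gpoly_skew[of a "Suc m"] by simp
  moreover have "coeff (gpoly_skew a (Suc m)) (Suc (2 * m + 1)) = 0"
    using coeff_pcompose_linear_near_top[of "gpoly a (Suc m)" "Suc (2 * m + 1)" 0 "-1"] deg
    by (simp add: gpoly_skew_def)
  ultimately show "degree (gpoly_skew a (Suc m)) \<le> 2 * m + 1"
    by (rule degree_le_if_coeff_Suc_eq_0)
  show "coeff (gpoly_skew a (Suc m)) (2 * m + 1)
     = 2 * gpoly_sublead (Suc m) + of_nat (2 * m + 2) * gpoly_lead (Suc m)"
    using coeff_pcompose_linear_near_top[OF deg, of "-1"] coeff_gpoly_lead[of a "Suc m"]
      coeff_gpoly_sublead[of a m]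
    by (simp add: gpoly_skew_def algebra_simps)
qed

lemma fps_nth_Gser_minus_Hser:
  "j \<ge> 1 \<Longrightarrow> fps_nth (Gser a j - Hser a j) m = poly (gpoly_skew a m) (of_nat j)"
  by (simp add: Gser_eq_Gfps Hser_eq_Gfps Gfps_def gpoly_skew_def poly_pcompose)

definition eser_poly :: "(nat \<Rightarrow> rat) \<Rightarrow> nat \<Rightarrow> rat poly" where
  "eser_poly a N =
     (\<Sum>i\<le>N. smult (fps_nth (1 + aser a * fps_X ^ 2) (N - i)) (gpoly_skew a (i + 2)))"

lemma fps_nth_Eser:
  assumes "j \<ge> 1"
  shows "fps_nth (Eser a j) N = poly (eser_poly a N) (of_nat j)"
proof -
  have "fps_nth (Eser a j) N
      = (\<Sum>i\<le>N. fps_nth (Gser a j - Hser a j) (i + 2)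
                  * fps_nth (1 + aser a * fps_X ^ 2) (N - i))"
    unfolding Eser_def fps_mult_nth fps_shift_nth atLeast0AtMost ..
  then show ?thesis
    using assms
    by (simp only: fps_nth_Gser_minus_Hser eser_poly_def poly_sum poly_smult mult.commute)
qed

lemma odd_about_half_eser_poly: "odd_about_half (eser_poly a N)"
  using odd_about_half_gpoly_skew[of a]
  by (simp add: odd_about_half_def eser_poly_def pcompose_sum pcompose_smult sum_negf)

lemma coeff_eser_poly_high:
  assumes "2 * N + 3 \<le> k"
  shows "coeff (eser_poly a N) k = coeff (gpoly_skew a (N + 2)) k"
proof -
  have "coeff (gpoly_skew a (i + 2)) k = 0" if "i < N" for i
    using degree_gpoly_skew[of a "i + 2"] that assms by (simp add: coeff_eq_0)
  then have "(\<Sum>i<N. fps_nth (1 + aser a * fps_X ^ 2) (N - i) * coeff (gpoly_skew a (i + 2)) k)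
      = 0"
    by simp
  then show ?thesis
    by (simp add: eser_poly_def coeff_sum flip: lessThan_Suc_atMost)
qed

lemma degree_eser_poly: "degree (eser_poly a N) \<le> 2 * N + 3"
proof (rule degree_le, intro allI impI)
  fix k assume "2 * N + 3 < k"
  then show "coeff (eser_poly a N) k = 0"
    using coeff_eser_poly_high[of N k a] degree_coeff_gpoly_skew_Suc(1)[of a "Suc N"]
    by (simp add: coeff_eq_0)
qed

lemma coeff_eser_poly_top:
  "coeff (eser_poly a N) (2 * N + 3)
     = 2 * (gpoly_sublead (N + 2) + of_nat (N + 2) * gpoly_lead (N + 2))"
  using coeff_eser_poly_high[of N "2 * N + 3" a] degree_coeff_gpoly_skew_Suc(2)[of a "Suc N"]
  by (simp add: eval_nat_numeral algebra_simps)

theorem proposition4p1: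
  fixes n :: nat and a :: "nat \<Rightarrow> rat"
  assumes "n \<ge> 1"
  shows "\<exists>S :: nat \<Rightarrow> rat.
           (\<forall>j::nat. j \<ge> 1 \<longrightarrow>
              fps_nth (Eser a j) (n - 1) =
                (2 * of_nat j - 1) *
                (a (n - 1) + (\<Sum>k\<le>n. S k * (of_nat j * (of_nat j - 1)) ^ k)))
         \<and> S n = (-1) ^ (n - 1) / (3 * 2 ^ n * fact (n - 1))"
proof -
  obtain N where n: "n = Suc N" using assms by (cases n) auto
  have "degree (eser_poly a N) \<le> 2 * n + 1" using degree_eser_poly[of a N] n by simp
  then obtain S where S: "eser_poly a N = (\<Sum>k\<le>n. smult (S k) (odd_basis k))"
    and S_coeff: "S n = coeff (eser_poly a N) (2 * n + 1) / 2"
    using odd_about_half_expansion[OF odd_about_half_eser_poly] by blast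
  have "coeff (eser_poly a N) (2 * n + 1) / 2
      = gpoly_sublead (N + 2) + of_nat (N + 2) * gpoly_lead (N + 2)"
    using coeff_eser_poly_top[of a N] n by (simp add: eval_nat_numeral)
  also have "\<dots> = (-1) ^ N / (3 * 2 ^ n * fact N)"
    using gpoly_sublead_plus_lead[of N] n by simp
  finally have S_top: "S n = (-1) ^ N / (3 * 2 ^ n * fact N)"
    using S_coeff by simp
  define S' where "S' = S(0 := S 0 - a N)"
  have S': "(\<Sum>k\<le>n. S' k * x ^ k) = (\<Sum>k\<le>n. S k * x ^ k) - a N" for x :: rat
    unfolding n sum.atMost_Suc_shift by (simp add: S'_def)
  have "fps_nth (Eser a j) N
      = (2 * of_nat j - 1) * (a N + (\<Sum>k\<le>n. S' k * (of_nat j * (of_nat j - 1)) ^ k))"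
    if "j \<ge> 1" for j
    unfolding fps_nth_Eser[OF that] S S'
    by (simp add: poly_sum poly_odd_basis sum_distrib_left mult_ac)
  moreover have "S' n = S n" by (simp add: S'_def n)
  ultimately show ?thesis
    using S_top n by (intro exI[of _ S']) simp
qed

end
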